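(* Let $X$ be a random variable with distribution $P$ on $\mathbb{Z}_+$ and mean $\lambda>0$, and let $\mathrm{Po}_\lambda(x)=e^{-\lambda}\lambda^x/x!$. Let $\mu=\sum_{x\ge0}\sqrt{P(x)\mathrm{Po}_\lambda(x)}$. Then $1-\mu^2\le K(X)$, and consequently $$\sum_{x\ge0}\Big(\sqrt{P(x)}-\sqrt{\mathrm{Po}_\lambda(x)}\Big)^2=2-2\mu\le 2K(X).$$
   Context: For $X$ with distribution $P$ on $\mathbb{Z}_+$ and mean $\lambda>0$, the scaled Fisher information is $K(X)=\lambda\sum_{x\ge0}\frac{\big(\frac{(x+1)P(x+1)}{\lambda}-P(x)\big)^2}{P(x)}$ (equivalently $\lambda E[\rho_X(X)^2]$ with $\rho_X(x)=\frac{(x+1)P(x+1)}{\lambda P(x)}-1$), with conventions $0/0=0$, $c/0=\infty$ for $c>0$. *)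

theory Defs
  imports "HOL-Analysis.Analysis"
begin

definition Po :: "real \<Rightarrow> nat \<Rightarrow> real" where
  "Po l x = exp (- l) * l ^ x / fact x"

text \<open>Summand of the scaled Fisher information, with conventions 0/0 = 0 and c/0 = infinity for c > 0.\<close>
definition fisher_term :: "(nat \<Rightarrow> real) \<Rightarrow> real \<Rightarrow> nat \<Rightarrow> ennreal" where
  "fisher_term P l x =
     (let d = (real (x + 1) * P (x + 1) / l - P x)\<^sup>2 in
      if P x = 0 then (if d = 0 then 0 else \<infinity>) else ennreal (d / P x))"

definition scaled_fisher :: "(nat \<Rightarrow> real) \<Rightarrow> real \<Rightarrow> ereal" where
  "scaled_fisher P l = ereal l * enn2ereal (\<Sum>x. fisher_term P l x)"

end

theory Submission
  imports Defs
begin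

text \<open>
  Write \<open>P = Po\<^sub>\<lambda> h\<^sup>2\<close> with \<open>h = sqrt (P / Po\<^sub>\<lambda>)\<close>. Under \<open>Po\<^sub>\<lambda>\<close> the function \<open>h\<close> has second
  moment \<open>1\<close> and mean \<open>\<mu>\<close>, so \<open>1 - \<mu>\<^sup>2\<close> is its variance. The Poisson Poincare inequality
  bounds this variance by \<open>\<lambda> \<Sum> Po\<^sub>\<lambda>(x) (h(x+1) - h(x))\<^sup>2\<close>, and each summand of \<open>K(X)\<close>,
  \<open>Po\<^sub>\<lambda>(x) (h(x+1)\<^sup>2 - h(x)\<^sup>2)\<^sup>2 / h(x)\<^sup>2\<close>, dominates \<open>Po\<^sub>\<lambda>(x) (h(x+1) - h(x))\<^sup>2\<close> because \<open>h \<ge> 0\<close>.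
  The Poincare inequality is proved for every sequence satisfying the Stein recurrence
  \<open>(x+1) q(x+1) = \<lambda> q(x)\<close>: writing the variance as a sum over pairs \<open>x < y\<close> and each
  difference \<open>h(y) - h(x)\<close> as a telescoping sum, Cauchy--Schwarz leaves the edge \<open>(k, k+1)\<close>
  with a weight which the recurrence evaluates in closed form and bounds by \<open>\<lambda> q(k)\<close>.
  The Hellinger identity and \<open>2 - 2\<mu> \<le> 2 (1 - \<mu>\<^sup>2)\<close> for \<open>0 \<le> \<mu> \<le> 1\<close> give the rest.
\<close>

lemma weighted_variance_eq_pair_sum:
  fixes q h :: "nat \<Rightarrow> real"
  shows "(\<Sum>x<N. q x) * (\<Sum>x<N. q x * (h x)\<^sup>2) - (\<Sum>x<N. q x * h x)\<^sup>2
       = (\<Sum>y<N. \<Sum>x<y. q x * q y * (h y - h x)\<^sup>2)"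
proof (induction N)
  case 0
  then show ?case by simp
next
  case (Suc N)
  have "(\<Sum>x<N. q x * q N * (h N - h x)\<^sup>2) = q N * ((\<Sum>x<N. q x * (h x)\<^sup>2)
     - 2 * h N * (\<Sum>x<N. q x * h x) + (h N)\<^sup>2 * (\<Sum>x<N. q x))"
    by (simp add: sum_distrib_left sum_subtractf sum.distrib power2_eq_square algebra_simps)
  then show ?case
    using Suc by (simp add: power2_eq_square algebra_simps)
qed

lemma square_diff_le_path_sum:
  fixes h :: "nat \<Rightarrow> real"
  assumes "x \<le> y"
  shows "(h y - h x)\<^sup>2 \<le> real (y - x) * (\<Sum>k\<in>{x..<y}. (h (Suc k) - h k)\<^sup>2)"
proof -
  have "h y - h x = (\<Sum>k\<in>{x..<y}. h (Suc k) - h k)"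
    using sum_Suc_diff'[OF assms, of h] by simp
  then show ?thesis
    using sum_squared_le_sum_of_squares[of "\<lambda>k. h (Suc k) - h k" "{x..<y}"]
    by (simp add: mult.commute)
qed

lemma sum_pairs_intervals_swap:
  fixes f :: "nat \<Rightarrow> nat \<Rightarrow> nat \<Rightarrow> real"
  shows "(\<Sum>y<N. \<Sum>x<y. \<Sum>k\<in>{x..<y}. f x y k)
     = (\<Sum>k<N. \<Sum>y<N. \<Sum>x<y. if x \<le> k \<and> k < y then f x y k else 0)"
proof -
  have "(\<Sum>k\<in>{x..<y}. f x y k) = (\<Sum>k<N. if x \<le> k \<and> k < y then f x y k else 0)"
    if "y < N" for x y
  proof -
    have "{x..<y} = {k\<in>{..<N}. x \<le> k \<and> k < y}"
      using that by auto
    then show ?thesis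
      by (simp only: sum.inter_filter[OF finite_lessThan])
  qed
  then have "(\<Sum>y<N. \<Sum>x<y. \<Sum>k\<in>{x..<y}. f x y k)
      = (\<Sum>y<N. \<Sum>x<y. \<Sum>k<N. if x \<le> k \<and> k < y then f x y k else 0)"
    by simp
  also have "\<dots> = (\<Sum>y<N. \<Sum>k<N. \<Sum>x<y. if x \<le> k \<and> k < y then f x y k else 0)"
    by (intro sum.cong refl sum.swap)
  also have "\<dots> = (\<Sum>k<N. \<Sum>y<N. \<Sum>x<y. if x \<le> k \<and> k < y then f x y k else 0)"
    by (rule sum.swap)
  finally show ?thesis .
qed

definition crossing_weight :: "(nat \<Rightarrow> real) \<Rightarrow> nat \<Rightarrow> nat \<Rightarrow> real" where
  "crossing_weight q N k =
     (\<Sum>y<N. \<Sum>x<y. if x \<le> k \<and> k < y then q x * q y * (real y - real x) else 0)"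

lemma stein_partial_mean:
  fixes q :: "nat \<Rightarrow> real"
  assumes stein: "\<And>x. real (Suc x) * q (Suc x) = l * q x"
  shows "(\<Sum>x<Suc k. real x * q x) = l * (\<Sum>x<k. q x)"
  by (induction k) (simp_all add: stein[simplified] distrib_left)

lemma crossing_weight_stein:
  fixes q :: "nat \<Rightarrow> real"
  assumes stein: "\<And>x. real (Suc x) * q (Suc x) = l * q x"
  shows "crossing_weight q (Suc k + m) k
    = l * (q k * (\<Sum>x<k + m. q x) - (\<Sum>x<k. q x) * q (k + m))"
proof (induction m)
  case 0
  have "crossing_weight q (Suc k) k = 0"
    unfolding crossing_weight_def by (intro sum.neutral ballI) auto
  then show ?case by simp
next
  case (Suc m)
  define N where "N = Suc k + m"
  have new_column: "(\<Sum>x<N. if x \<le> k \<and> k < N then q x * q N * (real N - real x) else 0)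
      = (\<Sum>x<Suc k. q x * q N * (real N - real x))"
  proof -
    have "{..<Suc k} = {x\<in>{..<N}. x \<le> k \<and> k < N}"
      unfolding N_def by auto
    then show ?thesis
      by (simp only: sum.inter_filter[OF finite_lessThan])
  qed
  have "crossing_weight q (Suc N) k
      = crossing_weight q N k + (\<Sum>x<Suc k. q x * q N * (real N - real x))"
    using new_column unfolding crossing_weight_def by simp
  also have "(\<Sum>x<Suc k. q x * q N * (real N - real x))
      = (real N * q N) * (\<Sum>x<Suc k. q x) - q N * (\<Sum>x<Suc k. real x * q x)"
    by (simp add: sum_distrib_left sum_subtractf algebra_simps)
  also have "\<dots> = l * q (k + m) * (\<Sum>x<Suc k. q x) - q N * (l * (\<Sum>x<k. q x))"
    using stein[of "k + m"] stein_partial_mean[OF stein] unfolding N_def by simp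
  also have "crossing_weight q N k = l * (q k * (\<Sum>x<k + m. q x) - (\<Sum>x<k. q x) * q (k + m))"
    unfolding N_def by (rule Suc.IH)
  finally show ?case
    unfolding N_def by (simp add: algebra_simps)
qed

lemma crossing_weight_le:
  fixes q :: "nat \<Rightarrow> real"
  assumes stein: "\<And>x. real (Suc x) * q (Suc x) = l * q x"
    and nonneg: "\<And>x. q x \<ge> 0" and partial: "\<And>n. (\<Sum>x<n. q x) \<le> 1" and "l \<ge> 0"
  shows "crossing_weight q N k \<le> l * q k"
proof (cases "N \<le> k")
  case True
  then have "crossing_weight q N k = 0"
    unfolding crossing_weight_def by (intro sum.neutral ballI) auto
  then show ?thesis
    using \<open>l \<ge> 0\<close> nonneg[of k] by simp
next
  case False
  then obtain m where N: "N = Suc k + m"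
    by (metis add_Suc less_imp_Suc_add not_le)
  have "l * (q k * (\<Sum>x<k + m. q x) - (\<Sum>x<k. q x) * q (k + m)) \<le> l * (q k * 1 - 0)"
    using \<open>l \<ge> 0\<close> nonneg partial[of "k + m"] sum_nonneg[of "{..<k}" q]
    by (intro mult_left_mono diff_mono mult_nonneg_nonneg) auto
  then show ?thesis
    using crossing_weight_stein[OF stein] N by simp
qed

lemma stein_poincare_partial:
  fixes q h :: "nat \<Rightarrow> real"
  assumes stein: "\<And>x. real (Suc x) * q (Suc x) = l * q x"
    and nonneg: "\<And>x. q x \<ge> 0" and partial: "\<And>n. (\<Sum>x<n. q x) \<le> 1" and "l \<ge> 0"
  shows "(\<Sum>x<N. q x) * (\<Sum>x<N. q x * (h x)\<^sup>2) - (\<Sum>x<N. q x * h x)\<^sup>2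
     \<le> l * (\<Sum>k<N. q k * (h (Suc k) - h k)\<^sup>2)"
proof -
  define a where "a k = (h (Suc k) - h k)\<^sup>2" for k
  have "(\<Sum>x<N. q x) * (\<Sum>x<N. q x * (h x)\<^sup>2) - (\<Sum>x<N. q x * h x)\<^sup>2
       = (\<Sum>y<N. \<Sum>x<y. q x * q y * (h y - h x)\<^sup>2)"
    by (rule weighted_variance_eq_pair_sum)
  also have "\<dots> \<le> (\<Sum>y<N. \<Sum>x<y. q x * q y * ((real y - real x) * (\<Sum>k\<in>{x..<y}. a k)))"
  proof (intro sum_mono)
    fix y x :: nat
    assume "x \<in> {..<y}"
    then have "(h y - h x)\<^sup>2 \<le> (real y - real x) * (\<Sum>k\<in>{x..<y}. a k)"
      using square_diff_le_path_sum[of x y h] unfolding a_def by (simp add: of_nat_diff)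
    then show "q x * q y * (h y - h x)\<^sup>2 \<le> q x * q y * ((real y - real x) * (\<Sum>k\<in>{x..<y}. a k))"
      using nonneg by (intro mult_left_mono) auto
  qed
  also have "\<dots> = (\<Sum>y<N. \<Sum>x<y. \<Sum>k\<in>{x..<y}. q x * q y * (real y - real x) * a k)"
    by (simp add: sum_distrib_left mult.assoc)
  also have "\<dots> = (\<Sum>k<N. \<Sum>y<N. \<Sum>x<y.
      if x \<le> k \<and> k < y then q x * q y * (real y - real x) * a k else 0)"
    by (rule sum_pairs_intervals_swap)
  also have "\<dots> = (\<Sum>k<N. a k * crossing_weight q N k)"
    unfolding crossing_weight_def
    by (simp add: sum_distrib_left if_distrib mult.commute cong: if_cong)
  also have "\<dots> \<le> (\<Sum>k<N. a k * (l * q k))"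
    using crossing_weight_le[OF stein nonneg partial \<open>l \<ge> 0\<close>]
    by (intro sum_mono mult_left_mono) (auto simp: a_def)
  also have "\<dots> = l * (\<Sum>k<N. q k * (h (Suc k) - h k)\<^sup>2)"
    by (simp add: a_def sum_distrib_left algebra_simps)
  finally show ?thesis .
qed

lemma stein_poincare:
  fixes q h :: "nat \<Rightarrow> real"
  assumes stein: "\<And>x. real (Suc x) * q (Suc x) = l * q x"
    and nonneg: "\<And>x. q x \<ge> 0" and "l \<ge> 0" and "q sums 1"
    and second: "(\<lambda>x. q x * (h x)\<^sup>2) sums A" and first: "(\<lambda>x. q x * h x) sums B"
    and energy: "summable (\<lambda>k. q k * (h (Suc k) - h k)\<^sup>2)"
  shows "A - B\<^sup>2 \<le> l * (\<Sum>k. q k * (h (Suc k) - h k)\<^sup>2)"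
proof -
  have partial: "(\<Sum>x<n. q x) \<le> 1" for n
    using sum_le_suminf[OF sums_summable[OF \<open>q sums 1\<close>], of "{..<n}"] nonneg
      sums_unique[OF \<open>q sums 1\<close>] by simp
  have "(\<lambda>N. (\<Sum>x<N. q x) * (\<Sum>x<N. q x * (h x)\<^sup>2) - (\<Sum>x<N. q x * h x)\<^sup>2)
      \<longlonglongrightarrow> 1 * A - B\<^sup>2"
    using \<open>q sums 1\<close> second first unfolding sums_def by (intro tendsto_intros)
  moreover have "(\<Sum>x<N. q x) * (\<Sum>x<N. q x * (h x)\<^sup>2) - (\<Sum>x<N. q x * h x)\<^sup>2
      \<le> l * (\<Sum>k. q k * (h (Suc k) - h k)\<^sup>2)" for N
  proof -
    have "(\<Sum>k<N. q k * (h (Suc k) - h k)\<^sup>2) \<le> (\<Sum>k. q k * (h (Suc k) - h k)\<^sup>2)"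
      using nonneg by (intro sum_le_suminf[OF energy]) auto
    then show ?thesis
      using stein_poincare_partial[OF stein nonneg partial \<open>l \<ge> 0\<close>, of N h]
        mult_left_mono[OF _ \<open>l \<ge> 0\<close>] by fastforce
  qed
  ultimately show ?thesis
    by (intro LIMSEQ_le_const2) auto
qed

lemma Po_pos: "l > 0 \<Longrightarrow> Po l x > 0"
  by (simp add: Po_def)

lemma Po_nonneg: "l > 0 \<Longrightarrow> Po l x \<ge> 0"
  using Po_pos less_imp_le by blast

lemma Po_stein: "real (Suc x) * Po l (Suc x) = l * Po l x"
  unfolding Po_def fact_Suc of_nat_mult by (simp add: divide_simps)

lemma Po_sums: "Po l sums 1"
proof -
  have "(\<lambda>n. exp (- l) * (l ^ n /\<^sub>R fact n)) sums (exp (- l) * exp l)"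
    by (rule sums_mult[OF exp_converges])
  moreover have "(\<lambda>n. exp (- l) * (l ^ n /\<^sub>R fact n)) = Po l"
    by (auto simp: fun_eq_iff Po_def scaleR_conv_of_real divide_inverse)
  ultimately show ?thesis
    by (simp add: exp_minus)
qed

lemma bhattacharyya_summable:
  fixes P Q :: "nat \<Rightarrow> real"
  assumes "\<And>x. P x \<ge> 0" "\<And>x. Q x \<ge> 0" "summable P" "summable Q"
  shows "summable (\<lambda>x. sqrt (P x * Q x))"
proof (rule summable_comparison_test')
  show "summable (\<lambda>x. (P x + Q x) / 2)"
    using assms by (intro summable_divide summable_add)
  show "norm (sqrt (P x * Q x)) \<le> (P x + Q x) / 2" for x
    using assms arith_geo_mean_sqrt[of "P x" "Q x"] by simp
qed

lemma hellinger_sums: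
  fixes P Q :: "nat \<Rightarrow> real"
  assumes P_nonneg: "\<And>x. P x \<ge> 0" and Q_nonneg: "\<And>x. Q x \<ge> 0"
    and "P sums 1" "Q sums 1"
  shows "(\<lambda>x. (sqrt (P x) - sqrt (Q x))\<^sup>2) sums (2 - 2 * (\<Sum>x. sqrt (P x * Q x)))"
proof -
  have "(\<lambda>x. sqrt (P x * Q x)) sums (\<Sum>x. sqrt (P x * Q x))"
    using assms by (intro summable_sums bhattacharyya_summable sums_summable)
  then have "(\<lambda>x. P x + Q x - 2 * sqrt (P x * Q x)) sums (1 + 1 - 2 * (\<Sum>x. sqrt (P x * Q x)))"
    using assms by (intro sums_diff sums_add sums_mult)
  moreover have "(sqrt (P x) - sqrt (Q x))\<^sup>2 = P x + Q x - 2 * sqrt (P x * Q x)" for x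
    using P_nonneg[of x] Q_nonneg[of x]
    by (simp add: power2_eq_square real_sqrt_mult algebra_simps)
  ultimately show ?thesis
    by simp
qed

lemma bhattacharyya_bounds:
  fixes P Q :: "nat \<Rightarrow> real"
  assumes "\<And>x. P x \<ge> 0" "\<And>x. Q x \<ge> 0" "P sums 1" "Q sums 1"
  shows "0 \<le> (\<Sum>x. sqrt (P x * Q x))" "(\<Sum>x. sqrt (P x * Q x)) \<le> 1"
proof -
  show "0 \<le> (\<Sum>x. sqrt (P x * Q x))"
    using assms by (intro suminf_nonneg bhattacharyya_summable sums_summable) auto
  have "0 \<le> 2 - 2 * (\<Sum>x. sqrt (P x * Q x))"
    using sums_le[OF _ sums_zero hellinger_sums[OF assms]] by simp
  then show "(\<Sum>x. sqrt (P x * Q x)) \<le> 1"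
    by simp
qed

lemma mult_sqrt_ratio:
  fixes p q :: real
  assumes "0 < q"
  shows "q * sqrt (p / q) = sqrt (p * q)"
proof -
  have "sqrt (p * q) = sqrt (p / q * q\<^sup>2)"
    using assms by (simp add: power2_eq_square)
  also have "\<dots> = sqrt (p / q) * q"
    unfolding real_sqrt_mult using assms by simp
  finally show ?thesis
    by simp
qed

lemma diff_sq_le_diff_squares_ratio:
  fixes a b c :: real
  assumes "0 < a" "0 \<le> b" "0 < c"
  shows "c * (b - a)\<^sup>2 \<le> (c * b\<^sup>2 - c * a\<^sup>2)\<^sup>2 / (c * a\<^sup>2)"
proof -
  have "c * (b - a)\<^sup>2 * (c * a\<^sup>2) = c\<^sup>2 * ((b - a)\<^sup>2 * a\<^sup>2)"
    by (simp add: power2_eq_square algebra_simps)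
  also have "\<dots> \<le> c\<^sup>2 * ((b - a)\<^sup>2 * (b + a)\<^sup>2)"
    using assms by (intro mult_left_mono power_mono) auto
  also have "\<dots> = (c * b\<^sup>2 - c * a\<^sup>2)\<^sup>2"
    by (simp add: power2_eq_square algebra_simps)
  finally show ?thesis
    using assms by (simp add: pos_le_divide_eq)
qed

lemma fisher_term_ge:
  fixes P :: "nat \<Rightarrow> real"
  assumes nonneg: "\<And>x. P x \<ge> 0" and "l > 0"
  defines "h \<equiv> \<lambda>x. sqrt (P x / Po l x)"
  shows "ennreal (Po l x * (h (Suc x) - h x)\<^sup>2) \<le> fisher_term P l x"
proof -
  have P_eq: "Po l y * (h y)\<^sup>2 = P y" for y
    using nonneg[of y] Po_pos[OF \<open>l > 0\<close>, of y] by (simp add: h_def)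
  have h_nonneg: "h y \<ge> 0" for y
    using nonneg[of y] Po_pos[OF \<open>l > 0\<close>, of y] by (simp add: h_def)
  have "real (x + 1) * P (x + 1) = real (Suc x) * Po l (Suc x) * (h (Suc x))\<^sup>2"
    using P_eq[of "Suc x"] by simp
  also have "\<dots> = l * (Po l x * (h (Suc x))\<^sup>2)"
    unfolding Po_stein by (rule mult.assoc)
  finally have forward: "real (x + 1) * P (x + 1) / l = Po l x * (h (Suc x))\<^sup>2"
    using \<open>l > 0\<close> by simp
  show ?thesis
  proof (cases "P x = 0")
    case True
    then have "h x = 0"
      by (simp add: h_def)
    then show ?thesis
      using True forward Po_pos[OF \<open>l > 0\<close>, of x] unfolding fisher_term_def
      by (auto simp: Let_def)
  next
    case False
    then have "h x > 0"
      using P_eq[of x] h_nonneg[of x] by (auto simp: order_less_le)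
    then have "Po l x * (h (Suc x) - h x)\<^sup>2
        \<le> (Po l x * (h (Suc x))\<^sup>2 - Po l x * (h x)\<^sup>2)\<^sup>2 / (Po l x * (h x)\<^sup>2)"
      using h_nonneg Po_pos[OF \<open>l > 0\<close>] by (intro diff_sq_le_diff_squares_ratio)
    then show ?thesis
      using False forward unfolding fisher_term_def P_eq by (simp add: Let_def ennreal_leI)
  qed
qed

lemma scaled_fisher_ge_energy:
  fixes P :: "nat \<Rightarrow> real"
  assumes "\<And>x. P x \<ge> 0" and "l > 0"
  defines "h \<equiv> \<lambda>x. sqrt (P x / Po l x)"
  shows "ereal l * enn2ereal (\<Sum>k. ennreal (Po l k * (h (Suc k) - h k)\<^sup>2)) \<le> scaled_fisher P l"
proof -
  have "(\<Sum>k. ennreal (Po l k * (h (Suc k) - h k)\<^sup>2)) \<le> (\<Sum>k. fisher_term P l k)"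
    using fisher_term_ge[OF assms(1,2)] unfolding h_def by (intro suminf_le summableI)
  then show ?thesis
    unfolding scaled_fisher_def using \<open>l > 0\<close>
    by (intro ereal_mult_left_mono) (auto simp: less_eq_ennreal.rep_eq)
qed

lemma one_minus_bhattacharyya_sq_le_scaled_fisher:
  fixes P :: "nat \<Rightarrow> real"
  assumes nonneg: "\<And>x. P x \<ge> 0" and "P sums 1" and "l > 0"
  shows "ereal (1 - (\<Sum>x. sqrt (P x * Po l x))\<^sup>2) \<le> scaled_fisher P l"
proof -
  define h where "h x = sqrt (P x / Po l x)" for x
  define g where "g = (\<lambda>k. Po l k * (h (Suc k) - h k)\<^sup>2)"
  have g_nonneg: "g k \<ge> 0" for k
    using Po_nonneg[OF \<open>l > 0\<close>] by (simp add: g_def)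
  have "ereal (1 - (\<Sum>x. sqrt (P x * Po l x))\<^sup>2) \<le> ereal l * enn2ereal (\<Sum>k. ennreal (g k))"
  proof (cases "summable g")
    case True
    have "Po l x * (h x)\<^sup>2 = P x" for x
      using nonneg[of x] Po_pos[OF \<open>l > 0\<close>, of x] by (simp add: h_def)
    then have "(\<lambda>x. Po l x * (h x)\<^sup>2) sums 1"
      using \<open>P sums 1\<close> by simp
    moreover have "(\<lambda>x. Po l x * h x) sums (\<Sum>x. sqrt (P x * Po l x))"
    proof -
      have "Po l x * h x = sqrt (P x * Po l x)" for x
        unfolding h_def by (rule mult_sqrt_ratio[OF Po_pos[OF \<open>l > 0\<close>]])
      moreover have "summable (\<lambda>x. sqrt (P x * Po l x))"
        using nonneg Po_nonneg[OF \<open>l > 0\<close>] sums_summable[OF \<open>P sums 1\<close>]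
          sums_summable[OF Po_sums] by (rule bhattacharyya_summable)
      ultimately show ?thesis
        by (simp add: summable_sums)
    qed
    ultimately have "1 - (\<Sum>x. sqrt (P x * Po l x))\<^sup>2 \<le> l * suminf g"
      using stein_poincare[OF Po_stein Po_nonneg[OF \<open>l > 0\<close>] _ Po_sums] True \<open>l > 0\<close>
      unfolding g_def by simp
    then show ?thesis
      using suminf_ennreal2[OF g_nonneg True] suminf_nonneg[OF True g_nonneg] by simp
  next
    case False
    then have "(\<Sum>k. ennreal (g k)) = top"
      using summable_suminf_not_top[of g] g_nonneg by blast
    then show ?thesis
      using \<open>l > 0\<close> by simp
  qed
  also have "\<dots> \<le> scaled_fisher P l"
    unfolding g_def h_def by (rule scaled_fisher_ge_energy[OF nonneg \<open>l > 0\<close>])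
  finally show ?thesis .
qed

theorem mainTheorem5:
  fixes P :: "nat \<Rightarrow> real" and l :: real
  assumes nonneg: "\<And>x. P x \<ge> 0"
    and prob: "P sums 1"
    and mean: "(\<lambda>x. real x * P x) sums l"
    and pos: "l > 0"
  defines "\<mu> \<equiv> (\<Sum>x. sqrt (P x * Po l x))"
  shows "ereal (1 - \<mu>\<^sup>2) \<le> scaled_fisher P l
    \<and> (\<Sum>x. (sqrt (P x) - sqrt (Po l x))\<^sup>2) = 2 - 2 * \<mu>
    \<and> ereal (2 - 2 * \<mu>) \<le> 2 * scaled_fisher P l"
proof -
  have fisher: "ereal (1 - \<mu>\<^sup>2) \<le> scaled_fisher P l"
    unfolding \<mu>_def by (rule one_minus_bhattacharyya_sq_le_scaled_fisher[OF nonneg prob pos])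
  have hellinger: "(\<Sum>x. (sqrt (P x) - sqrt (Po l x))\<^sup>2) = 2 - 2 * \<mu>"
    using hellinger_sums[OF nonneg Po_nonneg[OF pos] prob Po_sums]
    unfolding \<mu>_def by (rule sums_unique[symmetric])
  have "0 \<le> \<mu>" "\<mu> \<le> 1"
    unfolding \<mu>_def by (rule bhattacharyya_bounds[OF nonneg Po_nonneg[OF pos] prob Po_sums])+
  then have "2 - 2 * \<mu> \<le> 2 * (1 - \<mu>\<^sup>2)"
    using mult_left_mono[of \<mu> 1 \<mu>] by (simp add: power2_eq_square)
  then have "ereal (2 - 2 * \<mu>) \<le> 2 * ereal (1 - \<mu>\<^sup>2)"
    by simp
  also have "\<dots> \<le> 2 * scaled_fisher P l"
    using fisher by (rule ereal_mult_left_mono) simp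
  finally show ?thesis
    using fisher hellinger by blast
qed

end
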